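(* Let $n\ge 1$, let $Q:[0,\infty)\to\mathbb{C}^{n\times n}$ with $Q(x)=Q(x)^*$ and $\int_0^\infty (1+t)|Q(t)|\,dt<\infty$, and let $U$ be an $n\times n$ unitary matrix defining the selfadjoint operator $\mathcal{L}=-\frac{d^2}{dx^2}+Q$ on $L^2([0,\infty);\mathbb{C}^n)$ with boundary condition $\frac{i}{2}(U^*-\mathbb{I})f(0)+\frac12(U^*+\mathbb{I})f'(0)=0$; assume $\mathcal{L}$ has no virtual level at zero. Let $S(k)$ be the scattering matrix of $\mathcal{L}$ for real $k\ne0$. Then $$\lim_{k\to\infty}S(k)=\hat U$$ (limit along the real axis), where $\hat U$ is the unitary hermitian matrix obtained from $U$ by applying to its spectrum the map $z\mapsto 1$ for $z\in\mathbb{T}\setminus\{-1\}$ and $z\mapsto -1$ for $z=-1$ (i.e. $\hat U=\mathbb{I}-2P$ where $P$ is the orthogonal projection onto $\ker(U+\mathbb{I})$).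
   Context: $\mathbb{T}$ is the unit circle in $\mathbb{C}$. The Jost solution $F(x,k)$ ($\operatorname{Im}k\ge 0$) is the matrix solution of $-F''+QF=k^2F$ with $F(x,k)-e^{ikx}\mathbb{I}\to 0$ as $x\to\infty$. Put $A=\frac12(U+\mathbb{I})$, $B=\frac{i}{2}(U-\mathbb{I})$. For real $k\neq 0$ the scattering matrix is $$S(k)=-\Big[F(0,k)^*B-F_x(0,k)^*A\Big]\Big[F(0,-k)^*B-F_x(0,-k)^*A\Big]^{-1},$$ equivalently the unique matrix such that $\Psi(x,k)=F(x,-k)+F(x,k)S(k)$ solves $-\Psi''+Q\Psi=k^2\Psi$ and satisfies the boundary condition (namely $\Psi=\Xi M_-^{-1}$ with $\Xi(0)=A$, $\Xi_x(0)=B$). "No virtual level at zero" is the paper's standing assumption that zero is not a virtual level (in particular not an eigenvalue) of $\mathcal{L}$. *)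

theory Defs
  imports "HOL-Analysis.Analysis"
begin

type_synonym 'n cmat = "complex^'n^'n"

definition cadj :: "'n::finite cmat \<Rightarrow> 'n cmat" where
  "cadj M = (\<chi> i j. cnj (M $ j $ i))"

definition cinner :: "complex^'n::finite \<Rightarrow> complex^'n \<Rightarrow> complex" where
  "cinner x y = (\<Sum>i\<in>UNIV. x $ i * cnj (y $ i))"

definition unitary :: "'n::finite cmat \<Rightarrow> bool" where
  "unitary U \<longleftrightarrow> cadj U ** U = mat 1 \<and> U ** cadj U = mat 1"

definition bcA :: "'n::finite cmat \<Rightarrow> 'n cmat" where
  "bcA U = mat (1/2) ** (U + mat 1)"

definition bcB :: "'n::finite cmat \<Rightarrow> 'n cmat" where
  "bcB U = mat (\<i>/2) ** (U - mat 1)"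

definition kerUI :: "'n::finite cmat \<Rightarrow> (complex^'n) set" where
  "kerUI U = {v. (U + mat 1) *v v = 0}"

definition orth_proj_kerUI :: "'n::finite cmat \<Rightarrow> 'n cmat" where
  "orth_proj_kerUI U = (THE P. \<forall>v. P *v v \<in> kerUI U \<and>
       (\<forall>w\<in>kerUI U. cinner (v - P *v v) w = 0))"

definition Uhat :: "'n::finite cmat \<Rightarrow> 'n cmat" where
  "Uhat U = mat 1 - mat 2 ** orth_proj_kerUI U"

text \<open>\<open>psi\<close> is a (Caratheodory) solution on [0,\<infinity>) of -psi'' + Q psi = k^2 psi,
  with derivative \<open>psi'\<close>: psi is C^1 with derivative psi', and psi' is absolutely
  continuous with psi'' = (Q - k^2) psi almost everywhere (integral form).\<close>
definition vec_solution ::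
  "(real \<Rightarrow> 'n::finite cmat) \<Rightarrow> real \<Rightarrow> (real \<Rightarrow> complex^'n) \<Rightarrow> (real \<Rightarrow> complex^'n) \<Rightarrow> bool" where
  "vec_solution Q k psi psi' \<longleftrightarrow>
     (\<forall>x\<ge>0. (psi has_vector_derivative psi' x) (at x within {0..})) \<and>
     (\<forall>x\<ge>0. ((\<lambda>t. (Q t - mat (complex_of_real (k^2))) *v psi t) has_integral (psi' x - psi' 0)) {0..x})"

definition mat_solution ::
  "(real \<Rightarrow> 'n::finite cmat) \<Rightarrow> real \<Rightarrow> (real \<Rightarrow> 'n cmat) \<Rightarrow> (real \<Rightarrow> 'n cmat) \<Rightarrow> bool" where
  "mat_solution Q k F F' \<longleftrightarrow>
     (\<forall>x\<ge>0. (F has_vector_derivative F' x) (at x within {0..})) \<and>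
     (\<forall>x\<ge>0. ((\<lambda>t. (Q t - mat (complex_of_real (k^2))) ** F t) has_integral (F' x - F' 0)) {0..x})"

definition is_jost :: "(real \<Rightarrow> 'n::finite cmat) \<Rightarrow> real \<Rightarrow> (real \<Rightarrow> 'n cmat) \<Rightarrow> (real \<Rightarrow> 'n cmat) \<Rightarrow> bool" where
  "is_jost Q k F F' \<longleftrightarrow> mat_solution Q k F F' \<and>
     ((\<lambda>x. F x - mat (exp (\<i> * complex_of_real (k * x)))) \<longlongrightarrow> 0) at_top"

definition bc_holds :: "'n::finite cmat \<Rightarrow> complex^'n \<Rightarrow> complex^'n \<Rightarrow> bool" where
  "bc_holds U f0 f0' \<longleftrightarrow>
     (mat (\<i>/2) ** (cadj U - mat 1)) *v f0 + (mat (1/2) ** (cadj U + mat 1)) *v f0' = 0"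

text \<open>Zero is a virtual level of L: there is a nontrivial bounded solution of
  -psi'' + Q psi = 0 on [0,\<infinity>) satisfying the boundary condition
  (this includes the case that 0 is an eigenvalue).\<close>
definition virtual_level_zero :: "(real \<Rightarrow> 'n::finite cmat) \<Rightarrow> 'n cmat \<Rightarrow> bool" where
  "virtual_level_zero Q U \<longleftrightarrow> (\<exists>psi psi'. vec_solution Q 0 psi psi' \<and>
       bounded (psi ` {0..}) \<and> (\<exists>x\<ge>0. psi x \<noteq> 0) \<and> bc_holds U (psi 0) (psi' 0))"

definition scattering ::
  "'n::finite cmat \<Rightarrow> (real \<Rightarrow> real \<Rightarrow> 'n cmat) \<Rightarrow> (real \<Rightarrow> real \<Rightarrow> 'n cmat) \<Rightarrow> real \<Rightarrow> 'n cmat" where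
  "scattering U F Fx k =
     - ((cadj (F 0 k) ** bcB U - cadj (Fx 0 k) ** bcA U) **
        matrix_inv (cadj (F 0 (-k)) ** bcB U - cadj (Fx 0 (-k)) ** bcA U))"

end

(*
  Let f be an entry of the Jost solution F(x,k), k real, and z = \<plusminus>ik. The Wronskian
  W = e^(zx) (f' - z f) of f with the free solution e^(zx) has derivative e^(zx) (Q F)_ij, so it
  oscillates by at most \<integral>|Q F| on [0,\<infinity>). Since F(x,k) - e^(ikx) I \<rightarrow> 0 and e^(2ikx) equals \<plusminus>1
  along sequences tending to infinity, this gives F(0,k) = I + O(1/k) and F_x(0,k) = ik I + O(1);
  a bootstrap on sup |F| makes the constants depend on \<integral>|Q| only.

  Let P be the orthogonal projection onto ker(U + I). Then A P = P A = 0, B P = -i P and P + A is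
  invertible. Multiplying numerator and denominator of S(k) on the right by P + (1/k)(I - P), they
  tend to -i (P - A) and -i (P + A), so S(k) \<rightarrow> -(P - A)(P + A)^-1 = I - 2P.
*)

theory Submission
  imports Defs
begin

section \<open>Integration by parts against an indefinite integral\<close>

lemma sigma_finite_lebesgue: "sigma_finite_measure (lebesgue :: real measure)"
proof
  show "\<exists>A::real set set. countable A \<and> A \<subseteq> sets lebesgue \<and> \<Union>A = space lebesgue \<and>
      (\<forall>a\<in>A. emeasure lebesgue a \<noteq> \<infinity>)"
  proof (intro exI[of _ "range (\<lambda>n::nat. {- real n .. real n})"] conjI)
    show "\<Union> (range (\<lambda>n::nat. {- real n..real n})) = space lebesgue"
    proof auto
      fix x :: real
      obtain n :: nat where "\<bar>x\<bar> \<le> real n" using real_arch_simple by blast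
      then show "\<exists>n. - real n \<le> x \<and> x \<le> real n" by (intro exI[of _ n]) auto
    qed
  qed auto
qed

(* g is only Lebesgue measurable, whence the product of lebesgue with lborel. *)
lemma integrable_triangle_product:
  fixes g h :: "real \<Rightarrow> complex"
  assumes g: "g absolutely_integrable_on {a..b}" and h: "continuous_on {a..b} h"
  shows "integrable (lebesgue \<Otimes>\<^sub>M lborel)
    (\<lambda>(s, t). if s \<le> t then indicator {a..b} s *\<^sub>R g s * (indicator {a..b} t *\<^sub>R h t) else 0)"
    (is "integrable _ (case_prod ?\<phi>)")
proof -
  interpret P: pair_sigma_finite "lebesgue :: real measure" "lborel :: real measure"
    by (simp add: pair_sigma_finite_def sigma_finite_lebesgue sigma_finite_lborel)
  define g0 where "g0 s = indicator {a..b} s *\<^sub>R g s" for s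
  have g0i: "integrable lebesgue g0" using g unfolding set_integrable_def g0_def .
  have [measurable]: "g0 \<in> borel_measurable lebesgue" using g0i by (rule borel_measurable_integrable)
  have "(\<lambda>t. indicator {a..b} t *\<^sub>R h t) \<in> borel_measurable borel"
    by (rule borel_measurable_continuous_on_indicator) (auto simp: h)
  then have [measurable]: "(\<lambda>t. indicator {a..b} t *\<^sub>R h t) \<in> borel_measurable lborel" by simp
  have [measurable]: "(\<lambda>x::real. x) \<in> borel_measurable lebesgue" by (rule measurable_completion) simp
  have hcomp: "integrable lborel (\<lambda>t. indicator {c..b} t *\<^sub>R h t)" if "a \<le> c" for c
    by (rule borel_integrable_compact) (use h that in \<open>auto intro: continuous_on_subset\<close>)
  have \<phi>_eq: "?\<phi> s t = g0 s * (indicator {max a s..b} t *\<^sub>R h t)" for s t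
    by (auto simp: g0_def indicator_def)
  define C where "C = (\<integral>t. norm (indicator {a..b} t *\<^sub>R h t) \<partial>lborel)"
  have C: "(\<integral>t. norm (indicator {max a s..b} t *\<^sub>R h t) \<partial>lborel) \<le> C" for s
    unfolding C_def by (intro integral_mono integrable_norm hcomp) (auto simp: indicator_def)
  have "integrable lebesgue (\<lambda>s. \<integral>t. norm (?\<phi> s t) \<partial>lborel)"
  proof (rule Bochner_Integration.integrable_bound)
    show "integrable lebesgue (\<lambda>s. norm (g0 s) * C)"
      using g0i by (intro integrable_mult_left integrable_norm)
    show "(\<lambda>s. \<integral>t. norm (?\<phi> s t) \<partial>lborel) \<in> borel_measurable lebesgue"
      unfolding g0_def[symmetric] by measurable
    show "AE s in lebesgue. norm (\<integral>t. norm (?\<phi> s t) \<partial>lborel) \<le> norm (norm (g0 s) * C)"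
    proof (rule AE_I2)
      fix s
      have "(\<integral>t. norm (?\<phi> s t) \<partial>lborel) =
          norm (g0 s) * (\<integral>t. norm (indicator {max a s..b} t *\<^sub>R h t) \<partial>lborel)"
        unfolding \<phi>_eq norm_mult by simp
      moreover have "0 \<le> (\<integral>t. norm (indicator {max a s..b} t *\<^sub>R h t) \<partial>lborel)" by simp
      ultimately show "norm (\<integral>t. norm (?\<phi> s t) \<partial>lborel) \<le> norm (norm (g0 s) * C)"
        using C[of s] by (simp add: mult_left_mono abs_mult)
    qed
  qed
  moreover have "integrable lborel (\<lambda>t. ?\<phi> s t)" for s
    unfolding \<phi>_eq by (intro integrable_mult_right hcomp) auto
  moreover have "case_prod ?\<phi> \<in> borel_measurable (lebesgue \<Otimes>\<^sub>M lborel)"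
    unfolding g0_def[symmetric] by measurable
  ultimately show ?thesis by (intro P.Fubini_integrable) auto
qed

lemma integral_mult_indefinite_integral_swap:
  fixes g h :: "real \<Rightarrow> complex"
  assumes g: "g absolutely_integrable_on {a..b}" and h: "continuous_on {a..b} h"
  shows "integral {a..b} (\<lambda>t. h t * integral {a..t} g) = integral {a..b} (\<lambda>s. g s * integral {s..b} h)"
proof -
  interpret P: pair_sigma_finite "lebesgue :: real measure" "lborel :: real measure"
    by (simp add: pair_sigma_finite_def sigma_finite_lebesgue sigma_finite_lborel)
  define \<phi> where "\<phi> s t = (if s \<le> t then indicator {a..b} s *\<^sub>R g s * (indicator {a..b} t *\<^sub>R h t) else 0)"
    for s t
  have int\<phi>: "integrable (lebesgue \<Otimes>\<^sub>M lborel) (case_prod \<phi>)"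
    unfolding \<phi>_def by (rule integrable_triangle_product[OF g h])
  have inner_t: "(\<integral>s. \<phi> s t \<partial>lebesgue) = (if t \<in> {a..b} then h t * integral {a..t} g else 0)" for t
  proof (cases "t \<in> {a..b}")
    case True
    have "(\<integral>s. \<phi> s t \<partial>lebesgue) = (\<integral>s. (indicator {a..t} s *\<^sub>R g s) * h t \<partial>lebesgue)"
      using True by (intro Bochner_Integration.integral_cong) (auto simp: \<phi>_def indicator_def)
    also have "\<dots> = (\<integral>s. indicator {a..t} s *\<^sub>R g s \<partial>lebesgue) * h t"
      by (rule integral_mult_left_zero)
    also have "(\<integral>s. indicator {a..t} s *\<^sub>R g s \<partial>lebesgue) = integral {a..t} g"
      using set_lebesgue_integral_eq_integral(2)[OF absolutely_integrable_on_subinterval[OF g, of a t]] True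
      by (simp add: set_lebesgue_integral_def)
    finally show ?thesis using True by (simp add: mult.commute)
  next
    case False
    then have "\<phi> s t = 0" for s by (simp add: \<phi>_def)
    then show ?thesis using False by auto
  qed
  have inner_s: "(\<integral>t. \<phi> s t \<partial>lborel) = (if s \<in> {a..b} then g s * integral {s..b} h else 0)" for s
  proof (cases "s \<in> {a..b}")
    case True
    have "(\<integral>t. \<phi> s t \<partial>lborel) = g s * (\<integral>t. indicator {s..b} t *\<^sub>R h t \<partial>lborel)"
      using True by (subst integral_mult_right_zero[symmetric], intro Bochner_Integration.integral_cong)
        (auto simp: \<phi>_def indicator_def)
    also have "(\<integral>t. indicator {s..b} t *\<^sub>R h t \<partial>lborel) = integral {s..b} h"
    proof -
      have "integrable lborel (\<lambda>t. indicator {s..b} t *\<^sub>R h t)"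
        using True h by (intro borel_integrable_compact) (auto intro: continuous_on_subset)
      then show ?thesis using set_borel_integral_eq_integral(2)[of "{s..b}" h]
        by (simp add: set_lebesgue_integral_def set_integrable_def)
    qed
    finally show ?thesis using True by simp
  next
    case False
    then have "\<phi> s t = 0" for t by (simp add: \<phi>_def)
    then show ?thesis using False by auto
  qed
  have "((\<lambda>t. \<integral>s. \<phi> s t \<partial>lebesgue) has_integral (\<integral>t. (\<integral>s. \<phi> s t \<partial>lebesgue) \<partial>lborel)) UNIV"
    by (rule has_integral_integral_lborel[OF P.integrable_snd[OF int\<phi>]])
  then have "((\<lambda>t. h t * integral {a..t} g) has_integral (\<integral>t. (\<integral>s. \<phi> s t \<partial>lebesgue) \<partial>lborel)) {a..b}"
    unfolding inner_t has_integral_restrict_UNIV .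
  moreover have "((\<lambda>s. \<integral>t. \<phi> s t \<partial>lborel) has_integral (\<integral>s. (\<integral>t. \<phi> s t \<partial>lborel) \<partial>lebesgue)) UNIV"
    by (rule has_integral_integral_lebesgue[OF P.integrable_fst[OF int\<phi>]])
  then have "((\<lambda>s. g s * integral {s..b} h) has_integral (\<integral>s. (\<integral>t. \<phi> s t \<partial>lborel) \<partial>lebesgue)) {a..b}"
    unfolding inner_s has_integral_restrict_UNIV .
  ultimately show ?thesis using P.Fubini_integral[OF int\<phi>] by (simp add: integral_unique)
qed

lemma integration_by_parts_indefinite_integral:
  fixes g H h G :: "real \<Rightarrow> complex"
  assumes ab: "a \<le> b" and g: "g absolutely_integrable_on {a..b}"
    and H: "\<And>t. t \<in> {a..b} \<Longrightarrow> (H has_vector_derivative h t) (at t within {a..b})"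
    and h: "continuous_on {a..b} h"
    and G: "\<And>t. t \<in> {a..b} \<Longrightarrow> G t = G a + integral {a..t} g"
  shows "((\<lambda>t. H t * g t) has_integral (H b * G b - H a * G a - integral {a..b} (\<lambda>t. h t * G t))) {a..b}"
proof -
  have Hc: "continuous_on {a..b} H"
    using H by (rule continuous_on_vector_derivative)
  have gi: "g integrable_on {a..b}"
    using set_lebesgue_integral_eq_integral(1)[OF g] .
  have "(\<lambda>t. H t * g t) absolutely_integrable_on {a..b}"
  proof (rule absolutely_integrable_bounded_measurable_product[OF bilinear_times _ _ _ g])
    show "H \<in> borel_measurable (lebesgue_on {a..b})"
      by (rule continuous_imp_measurable_on_sets_lebesgue[OF Hc]) simp
    show "bounded (H ` {a..b})"
      by (rule compact_imp_bounded[OF compact_continuous_image[OF Hc]]) simp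
  qed simp
  then have Hg: "(\<lambda>t. H t * g t) integrable_on {a..b}"
    by (rule set_lebesgue_integral_eq_integral(1))
  have FTC: "(h has_integral (H b - H s)) {s..b}" if "s \<in> {a..b}" for s
    using that by (intro fundamental_theorem_of_calculus)
      (auto intro: has_vector_derivative_within_subset[OF H])
  have "integral {a..b} (\<lambda>t. h t * integral {a..t} g) = integral {a..b} (\<lambda>s. g s * H b - H s * g s)"
    unfolding integral_mult_indefinite_integral_swap[OF g h]
    by (intro integral_cong) (auto simp: integral_unique[OF FTC] algebra_simps)
  also have "\<dots> = integral {a..b} g * H b - integral {a..b} (\<lambda>t. H t * g t)"
    by (intro integral_unique has_integral_diff has_integral_mult_left integrable_integral gi Hg)
  finally have swap: "integral {a..b} (\<lambda>t. H t * g t) =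
      integral {a..b} g * H b - integral {a..b} (\<lambda>t. h t * integral {a..t} g)"
    by simp
  have "integral {a..b} (\<lambda>t. h t * G t) = integral {a..b} (\<lambda>t. h t * G a + h t * integral {a..t} g)"
  proof (rule integral_cong)
    fix t assume "t \<in> {a..b}"
    from G[OF this] show "h t * G t = h t * G a + h t * integral {a..t} g"
      by (simp add: distrib_left)
  qed
  also have "\<dots> = (H b - H a) * G a + integral {a..b} (\<lambda>t. h t * integral {a..t} g)"
    using FTC[of a] ab
    by (intro integral_unique has_integral_add has_integral_mult_left integrable_integral
        integrable_continuous_interval continuous_intros h indefinite_integral_continuous_1 gi) auto
  finally show ?thesis
    using integrable_integral[OF Hg] G[of b] ab unfolding swap by (simp add: algebra_simps)
qed

lemma matrix_add_rdistrib: "(A + B) ** C = A ** C + B ** C"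
  for A B :: "'a::semiring_1^'n::finite^'m::finite"
  by (vector matrix_matrix_mult_def sum.distrib[symmetric] field_simps)

interpretation cmat_mult: bounded_bilinear
  "(**) :: complex^'n::finite^'m::finite \<Rightarrow> complex^'p::finite^'n \<Rightarrow> complex^'p^'m"
  unfolding bilinear_conv_bounded_bilinear[symmetric] bilinear_def linear_iff
  by (simp add: matrix_add_ldistrib matrix_add_rdistrib scalar_matrix_assoc matrix_scalar_ac)

lemma bounded_linear_cadj: "bounded_linear (cadj :: 'n::finite cmat \<Rightarrow> 'n cmat)"
  unfolding linear_conv_bounded_linear[symmetric] linear_iff
  by (simp add: cadj_def vec_eq_iff)

lemmas tendsto_cadj = bounded_linear.tendsto[OF bounded_linear_cadj]

lemma mat_mult_left: "mat c ** A = (\<chi> i j. c * A $ i $ j)"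
  for A :: "'a::comm_ring_1^'n::finite^'n"
  unfolding matrix_matrix_mult_def mat_def
  by (auto simp: vec_eq_iff if_distrib if_distribR sum.delta cong: if_cong)

lemma mat_mult_right: "A ** mat c = (\<chi> i j. c * A $ i $ j)"
  for A :: "'a::comm_ring_1^'n::finite^'n"
  unfolding matrix_matrix_mult_def mat_def
  by (auto simp: vec_eq_iff if_distrib if_distribR sum.delta' mult.commute cong: if_cong)

lemma mat_mult_comm: "mat c ** A = A ** mat c"
  for A :: "'a::comm_ring_1^'n::finite^'n"
  by (simp add: mat_mult_left mat_mult_right)

lemma mat_mult_mat: "mat a ** mat b = (mat (a * b) :: 'a::comm_ring_1^'n::finite^'n)"
  unfolding mat_mult_left by (simp add: vec_eq_iff mat_def)

lemma mat_uminus: "- mat c = (mat (- c) :: 'a::ring_1^'n::finite^'n)"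
  by (simp add: vec_eq_iff mat_def)

lemma cadj_scaleR: "cadj (r *\<^sub>R A) = r *\<^sub>R cadj (A :: 'n::finite cmat)"
  by (simp add: cadj_def vec_eq_iff)

lemma cadj_mat: "cadj (mat c :: 'n::finite cmat) = mat (cnj c)"
  by (simp add: cadj_def vec_eq_iff mat_def)

lemma tendsto_det:
  fixes X :: "'b \<Rightarrow> 'n::finite cmat"
  assumes "(X \<longlongrightarrow> L) F"
  shows "((\<lambda>x. det (X x)) \<longlongrightarrow> det L) F"
  unfolding det_def by (intro tendsto_sum tendsto_mult tendsto_const tendsto_prod tendsto_vec_nth assms)

lemma matrix_inv_mult:
  fixes A :: "'n::finite cmat"
  assumes "invertible A"
  shows "A ** matrix_inv A = mat 1" "matrix_inv A ** A = mat 1"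
  using someI_ex[OF assms[unfolded invertible_def]] unfolding matrix_inv_def by auto

lemma matrix_inv_eqI:
  fixes A B :: "'n::finite cmat"
  assumes "A ** B = mat 1"
  shows "invertible A" "matrix_inv A = B"
proof -
  show "invertible A"
    using assms matrix_left_right_inverse unfolding invertible_def by blast
  then have "matrix_inv A ** (A ** B) = B"
    by (simp add: matrix_mul_assoc matrix_inv_mult)
  then show "matrix_inv A = B" using assms by simp
qed

lemma matrix_inv_mult_right:
  fixes D J :: "'n::finite cmat"
  assumes "invertible (D ** J)"
  shows "matrix_inv D = J ** matrix_inv (D ** J)"
  using matrix_inv_mult(1)[OF assms] by (intro matrix_inv_eqI(2)) (simp add: matrix_mul_assoc)

lemma matrix_inv_mat_mult:
  fixes M :: "'n::finite cmat"
  assumes M: "invertible M" and c: "c \<noteq> 0"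
  shows "invertible (mat c ** M)" "matrix_inv (mat c ** M) = matrix_inv M ** mat (inverse c)"
proof -
  have "(mat c ** M) ** (matrix_inv M ** mat (inverse c)) =
      mat c ** (M ** matrix_inv M) ** mat (inverse c)"
    by (simp add: matrix_mul_assoc)
  also have "\<dots> = mat 1"
    using c by (simp add: matrix_inv_mult(1)[OF M] mat_mult_mat)
  finally show "invertible (mat c ** M)" "matrix_inv (mat c ** M) = matrix_inv M ** mat (inverse c)"
    by (rule matrix_inv_eqI)+
qed

lemma mat_mult_cancel:
  fixes X Y :: "'n::finite cmat"
  assumes "c \<noteq> 0"
  shows "mat c ** X ** (Y ** mat (inverse c)) = X ** Y"
proof -
  have "mat c ** X ** (Y ** mat (inverse c)) = mat c ** (X ** (Y ** mat (inverse c)))"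
    by (simp add: matrix_mul_assoc)
  also have "X ** (Y ** mat (inverse c)) = mat (inverse c) ** (X ** Y)"
    by (subst mat_mult_comm) (simp add: matrix_mul_assoc)
  also have "mat c ** (mat (inverse c) ** (X ** Y)) = X ** Y"
    using assms by (simp add: matrix_mul_assoc mat_mult_mat)
  finally show ?thesis .
qed

lemma matrix_inv_cramer:
  fixes Y :: "'n::finite cmat"
  assumes d: "det Y \<noteq> 0"
  shows "matrix_inv Y $ k $ j = det (\<chi> i l. if l = k then axis j 1 $ i else Y $ i $ l) / det Y"
proof -
  define x where "x = matrix_inv Y *v axis j 1"
  have "Y *v x = axis j 1"
    using d unfolding x_def matrix_vector_mul_assoc by (simp add: matrix_inv_mult invertible_det_nz)
  then have "x = (\<chi> k. det (\<chi> i l. if l = k then axis j 1 $ i else Y $ i $ l) / det Y)"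
    using cramer[OF d] by blast
  moreover have "x $ k = matrix_inv Y $ k $ j"
    unfolding x_def
    by (simp add: matrix_vector_mult_def axis_def if_distrib if_distribR sum.delta' cong: if_cong)
  ultimately show ?thesis by simp
qed

lemma tendsto_matrix_inv:
  fixes X :: "'b \<Rightarrow> 'n::finite cmat"
  assumes X: "(X \<longlongrightarrow> L) F" and L: "invertible L"
  shows "eventually (\<lambda>x. invertible (X x)) F" "((\<lambda>x. matrix_inv (X x)) \<longlongrightarrow> matrix_inv L) F"
proof -
  have d: "det L \<noteq> 0" using L invertible_det_nz by blast
  have ev: "eventually (\<lambda>x. det (X x) \<noteq> 0) F"
    by (rule tendsto_imp_eventually_ne[OF tendsto_det[OF X] d])
  then show "eventually (\<lambda>x. invertible (X x)) F"
    by eventually_elim (simp add: invertible_det_nz)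
  have entries: "((\<lambda>x. X x $ i $ l) \<longlongrightarrow> L $ i $ l) F" for i l
    by (intro tendsto_vec_nth X)
  show "((\<lambda>x. matrix_inv (X x)) \<longlongrightarrow> matrix_inv L) F"
  proof (intro vec_tendstoI)
    fix k j
    have "((\<lambda>x. det (\<chi> i l. if l = k then axis j 1 $ i else X x $ i $ l) / det (X x)) \<longlongrightarrow>
        det (\<chi> i l. if l = k then axis j 1 $ i else L $ i $ l) / det L) F"
      by (intro tendsto_divide d tendsto_det tendsto_vec_lambda) (simp_all add: entries X)
    then show "((\<lambda>x. matrix_inv (X x) $ k $ j) \<longlongrightarrow> matrix_inv L $ k $ j) F"
      unfolding matrix_inv_cramer[OF d]
      by (rule Lim_transform_eventually) (use ev in \<open>auto elim: eventually_mono simp: matrix_inv_cramer\<close>)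
  qed
qed

lemma tendsto_matrixI:
  fixes X :: "'b \<Rightarrow> 'a::topological_space^'n::finite^'m::finite"
  assumes "\<And>i j. ((\<lambda>x. X x $ i $ j) \<longlongrightarrow> L $ i $ j) F"
  shows "(X \<longlongrightarrow> L) F"
  using assms by (intro vec_tendstoI)

lemma norm_matrix_entry_le: "norm (M $ i $ j) \<le> norm M"
  for M :: "'a::real_normed_vector^'n::finite^'m::finite"
  using Finite_Cartesian_Product.norm_nth_le[of "M $ i" j] Finite_Cartesian_Product.norm_nth_le[of M i]
  by linarith

lemma bounded_linear_matrix_entry:
  "bounded_linear (\<lambda>M::'a::real_normed_vector^'n::finite^'m::finite. M $ i $ j)"
  using bounded_linear_compose[OF bounded_linear_vec_nth[of j] bounded_linear_vec_nth[of i]] by simp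

lemma norm_matrix_mult_entry_le:
  fixes A B :: "complex^'n::finite^'n"
  assumes "\<And>l. norm (B $ l $ j) \<le> m"
  shows "norm ((A ** B) $ i $ j) \<le> real CARD('n) * norm A * m"
proof -
  have "norm ((A ** B) $ i $ j) \<le> (\<Sum>l\<in>UNIV. norm (A $ i $ l * B $ l $ j))"
    unfolding matrix_matrix_mult_def by (simp add: norm_sum)
  also have "\<dots> \<le> (\<Sum>l\<in>(UNIV::'n set). norm A * m)"
    using norm_matrix_entry_le[of A i] assms
    by (intro sum_mono) (simp add: norm_mult mult_mono')
  finally show ?thesis by simp
qed

lemma matrix_mult_diff_mat_entry: "((A - mat c) ** B) $ i $ j = (A ** B) $ i $ j - c * B $ i $ j"
  for A B :: "'a::comm_ring_1^'n::finite^'n"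
proof -
  have "((A - mat c) ** B) $ i $ j =
      (\<Sum>l\<in>UNIV. A $ i $ l * B $ l $ j) - (\<Sum>l\<in>UNIV. (if i = l then c else 0) * B $ l $ j)"
    by (simp add: matrix_matrix_mult_def mat_def left_diff_distrib sum_subtractf)
  also have "(\<Sum>l\<in>UNIV. (if i = l then c else 0) * B $ l $ j) = c * B $ i $ j"
    by (simp add: if_distrib if_distribR cong: if_cong)
  finally show ?thesis by (simp add: matrix_matrix_mult_def)
qed

section \<open>High-energy bounds for the Jost solution\<close>

definition helmholtz_solution ::
  "real \<Rightarrow> (real \<Rightarrow> complex) \<Rightarrow> (real \<Rightarrow> complex) \<Rightarrow> (real \<Rightarrow> complex) \<Rightarrow> bool" where
  "helmholtz_solution k g f f' \<longleftrightarrow>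
     (\<forall>x\<ge>0. (f has_vector_derivative f' x) (at x within {0..})) \<and>
     (\<forall>x\<ge>0. g absolutely_integrable_on {0..x}) \<and>
     (\<forall>x\<ge>0. ((\<lambda>t. g t - of_real (k^2) * f t) has_integral (f' x - f' 0)) {0..x})"

definition exp_wronskian :: "complex \<Rightarrow> (real \<Rightarrow> complex) \<Rightarrow> (real \<Rightarrow> complex) \<Rightarrow> real \<Rightarrow> complex"
  where "exp_wronskian z f f' t = exp (of_real t * z) * (f' t - z * f t)"

lemma helmholtz_solution_continuous:
  assumes "helmholtz_solution k g f f'"
  shows "continuous_on {0..} f"
  using assms unfolding helmholtz_solution_def by (intro continuous_on_vector_derivative) auto

lemma helmholtz_solution_second_derivative_integrable:
  assumes sol: "helmholtz_solution k g f f'" and "0 \<le> a"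
  shows "(\<lambda>t. g t - of_real (k^2) * f t) absolutely_integrable_on {a..b}"
proof (rule set_integral_diff(1))
  show "g absolutely_integrable_on {a..b}"
  proof (cases "a \<le> b")
    case True
    then have "g absolutely_integrable_on {0..b}"
      using sol \<open>0 \<le> a\<close> unfolding helmholtz_solution_def by simp
    then show ?thesis
      by (rule absolutely_integrable_on_subinterval) (use \<open>0 \<le> a\<close> in auto)
  qed simp
  have "continuous_on {a..b} f"
    by (rule continuous_on_subset[OF helmholtz_solution_continuous[OF sol]]) (use \<open>0 \<le> a\<close> in auto)
  then show "(\<lambda>t. of_real (k^2) * f t) absolutely_integrable_on {a..b}"
    using absolutely_integrable_continuous[of a b "\<lambda>t. of_real (k^2) * f t"]
    by (simp add: cbox_interval continuous_intros)
qed

lemma helmholtz_solution_derivative_eq: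
  assumes sol: "helmholtz_solution k g f f'" and "0 \<le> a" "a \<le> t"
  shows "f' t = f' a + integral {a..t} (\<lambda>t. g t - of_real (k^2) * f t)"
proof -
  let ?g = "\<lambda>t. g t - of_real (k^2) * f t"
  have int: "(?g has_integral (f' x - f' 0)) {0..x}" if "0 \<le> x" for x
    using sol that unfolding helmholtz_solution_def by blast
  have "integral {0..a} ?g + integral {a..t} ?g = integral {0..t} ?g"
    using Henstock_Kurzweil_Integration.integral_combine[of 0 a t ?g] int[of t] assms by auto
  then show ?thesis
    using int[of a, THEN integral_unique] int[of t, THEN integral_unique] assms by auto
qed

lemma has_vector_derivative_exp_scaled:
  fixes z :: complex
  shows "((\<lambda>t. exp (of_real t * z)) has_vector_derivative (z * exp (of_real t * z))) (at t within S)"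
proof -
  have "((\<lambda>w. exp (w * z)) has_field_derivative (exp (of_real t * z) * z)) (at (of_real t))"
    by (auto intro!: derivative_eq_intros)
  from has_vector_derivative_real_field[OF this] show ?thesis by (simp add: mult.commute)
qed

lemma has_integral_exp_wronskian:
  assumes z: "z^2 = - of_real (k^2)" and sol: "helmholtz_solution k g f f'"
    and ab: "0 \<le> a" "a \<le> b"
  shows "((\<lambda>t. exp (of_real t * z) * g t) has_integral
          (exp_wronskian z f f' b - exp_wronskian z f f' a)) {a..b}"
proof -
  define H where "H t = exp (of_real t * z)" for t
  define f'' where "f'' t = g t - of_real (k^2) * f t" for t
  have Hd: "(H has_vector_derivative z * H t) (at t within S)" for t S
    unfolding H_def by (rule has_vector_derivative_exp_scaled)
  have Hc: "continuous_on S H" for S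
    by (rule continuous_on_vector_derivative) (rule Hd)
  have f'': "f'' absolutely_integrable_on {a..b}"
    unfolding f''_def using sol ab(1) by (rule helmholtz_solution_second_derivative_integrable)
  have f': "f' t = f' a + integral {a..t} f''" if "t \<in> {a..b}" for t
    unfolding f''_def using sol ab(1) that by (intro helmholtz_solution_derivative_eq) auto
  have fd: "(f has_vector_derivative f' t) (at t within {a..b})" if "t \<in> {a..b}" for t
  proof -
    have "(f has_vector_derivative f' t) (at t within {0..})"
      using sol that ab unfolding helmholtz_solution_def by simp
    then show ?thesis
      by (rule has_vector_derivative_within_subset) (use ab in auto)
  qed
  have "continuous_on {a..b} (\<lambda>t. f' a + integral {a..t} f'')"
    by (intro continuous_intros indefinite_integral_continuous_1 set_lebesgue_integral_eq_integral(1)[OF f''])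
  then have f'c: "continuous_on {a..b} f'"
    by (rule continuous_on_eq) (metis f')
  have I1: "((\<lambda>t. H t * f'' t) has_integral
      (H b * f' b - H a * f' a - integral {a..b} (\<lambda>t. z * H t * f' t))) {a..b}"
    by (rule integration_by_parts_indefinite_integral[OF ab(2) f'' Hd])
      (auto intro!: continuous_intros Hc f')
  have "((\<lambda>t. - z * (f t * H t)) has_vector_derivative - z * (f t * (z * H t) + f' t * H t))
      (at t within {a..b})" if "t \<in> {a..b}" for t
    using fd[OF that] by (auto intro!: derivative_eq_intros Hd)
  from fundamental_theorem_of_calculus[OF ab(2) this]
  have I2: "((\<lambda>t. - z * (f t * (z * H t) + f' t * H t)) has_integral
      (- z * f b * H b - (- z * f a * H a))) {a..b}"
    by (simp add: mult.assoc)
  have I3: "((\<lambda>t. z * H t * f' t) has_integral integral {a..b} (\<lambda>t. z * H t * f' t)) {a..b}"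
    by (intro integrable_integral integrable_continuous_interval continuous_intros Hc f'c)
  have "H t * f'' t + (- z * (f t * (z * H t) + f' t * H t) + z * H t * f' t) = H t * g t" for t
  proof -
    have "- z * (f t * (z * H t)) = - (z^2) * f t * H t" by (simp add: power2_eq_square algebra_simps)
    then show ?thesis unfolding f''_def z by (simp add: algebra_simps)
  qed
  with has_integral_add[OF I1 has_integral_add[OF I2 I3]] show ?thesis
    unfolding H_def exp_wronskian_def by (simp add: algebra_simps)
qed

lemma exp_wronskian_oscillation:
  fixes w :: "real \<Rightarrow> real"
  assumes z: "z^2 = - of_real (k^2)" "Re z = 0" and sol: "helmholtz_solution k g f f'"
    and w: "\<And>t. t \<ge> 0 \<Longrightarrow> norm (g t) \<le> w t" "w integrable_on {0..}"
    and ab: "0 \<le> a" "a \<le> b"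
  shows "norm (exp_wronskian z f f' b - exp_wronskian z f f' a) \<le> integral {0..} w"
proof -
  note I = has_integral_exp_wronskian[OF z(1) sol ab]
  have wab: "w integrable_on {a..b}" by (rule integrable_on_subinterval[OF w(2)]) (use ab in auto)
  have "norm (exp_wronskian z f f' b - exp_wronskian z f f' a) =
      norm (integral {a..b} (\<lambda>t. exp (of_real t * z) * g t))"
    using I by (simp add: integral_unique)
  also have "\<dots> \<le> integral {a..b} w"
  proof (rule integral_norm_bound_integral[OF has_integral_integrable[OF I] wab])
    fix t assume "t \<in> {a..b}"
    then show "norm (exp (of_real t * z) * g t) \<le> w t"
      using z(2) w(1)[of t] ab by (simp add: norm_mult)
  qed
  also have "\<dots> \<le> integral {0..} w"
    by (rule integral_subset_le) (use ab wab w in \<open>auto intro: order_trans[OF norm_ge_zero]\<close>)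
  finally show ?thesis .
qed

lemma seq_at_top_exp_ii_eq_cis:
  fixes \<kappa> \<theta> :: real
  assumes "\<kappa> \<noteq> 0"
  obtains s :: "nat \<Rightarrow> real"
  where "filterlim s at_top sequentially" "\<And>n. exp (\<i> * of_real (\<kappa> * s n)) = cis \<theta>"
proof
  define s where "s n = \<theta> / \<kappa> + 2 * pi / \<bar>\<kappa>\<bar> * real n" for n
  show "filterlim s at_top sequentially"
    unfolding s_def using assms
    by (intro filterlim_tendsto_add_at_top[OF tendsto_const] filterlim_tendsto_pos_mult_at_top
        [OF tendsto_const _ filterlim_real_sequentially]) auto
  fix n
  have "\<kappa> * s n = \<theta> + 2 * pi * (sgn \<kappa> * real n)"
    unfolding s_def using assms by (simp add: field_simps sgn_if)
  moreover have "sgn \<kappa> * real n \<in> \<int>"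
    by (simp add: sgn_if)
  ultimately show "exp (\<i> * of_real (\<kappa> * s n)) = cis \<theta>"
    by (simp only: cis_conv_exp[symmetric] cis_mult[symmetric] cis_multiple_2pi mult_1_right)
qed

(* Along suitable sequences tending to infinity the factor exp (i \<kappa> y) equals 1, resp. -1, so the
   oscillation bound controls A1 - A2 - c and A1 + A2 - c everywhere. *)
lemma bounded_oscillation_limit_bound:
  fixes A1 A2 :: "real \<Rightarrow> complex" and \<kappa> B :: real
  assumes "\<kappa> \<noteq> 0"
    and osc1: "\<And>a b. 0 \<le> a \<Longrightarrow> a \<le> b \<Longrightarrow> norm (A1 b - A1 a) \<le> B"
    and osc2: "\<And>a b. 0 \<le> a \<Longrightarrow> a \<le> b \<Longrightarrow> norm (A2 b - A2 a) \<le> B"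
    and lim: "((\<lambda>y. A1 y - exp (\<i> * of_real (\<kappa> * y)) * A2 y) \<longlongrightarrow> c) at_top"
    and x: "0 \<le> x"
  shows "norm (A1 x - c) \<le> 2 * B" "norm (A2 x) \<le> 2 * B"
proof -
  have along: "norm (A1 x - cis \<theta> * A2 x - c) \<le> 2 * B" for \<theta>
  proof -
    obtain s where s: "filterlim s at_top sequentially" "\<And>n. exp (\<i> * of_real (\<kappa> * s n)) = cis \<theta>"
      using seq_at_top_exp_ii_eq_cis[OF \<open>\<kappa> \<noteq> 0\<close>] by blast
    define r where "r n = A1 (s n) - cis \<theta> * A2 (s n) - c" for n
    have "(r \<longlongrightarrow> 0) sequentially"
      using filterlim_compose[OF lim s(1)] unfolding r_def s(2) by (simp add: LIM_zero)
    then have "((\<lambda>n. 2 * B + norm (r n)) \<longlongrightarrow> 2 * B) sequentially"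
      using tendsto_add[OF tendsto_const tendsto_norm] by fastforce
    moreover have "eventually (\<lambda>n. norm (A1 x - cis \<theta> * A2 x - c) \<le> 2 * B + norm (r n)) sequentially"
      using s(1) unfolding filterlim_at_top
    proof (rule eventually_mono[OF spec[of _ x]])
      fix n assume sn: "x \<le> s n"
      have "A1 x - cis \<theta> * A2 x - c = - (A1 (s n) - A1 x) + cis \<theta> * (A2 (s n) - A2 x) + r n"
        unfolding r_def by (simp add: algebra_simps)
      also have "norm \<dots> \<le> norm (A1 (s n) - A1 x) + norm (A2 (s n) - A2 x) + norm (r n)"
        by (rule norm_triangle_le[OF add_mono[OF norm_triangle_le]])
          (simp_all add: norm_mult norm_minus_commute)
      finally show "norm (A1 x - cis \<theta> * A2 x - c) \<le> 2 * B + norm (r n)"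
        using osc1[OF x sn] osc2[OF x sn] by simp
    qed
    ultimately show ?thesis by (rule tendsto_le[OF trivial_limit_sequentially _ tendsto_const])
  qed
  have minus: "norm (A1 x - A2 x - c) \<le> 2 * B" and plus: "norm (A1 x + A2 x - c) \<le> 2 * B"
    using along[of 0] along[of pi] by simp_all
  have sum: "(A1 x - A2 x - c) + (A1 x + A2 x - c) = 2 * (A1 x - c)"
    and diff: "(A1 x + A2 x - c) - (A1 x - A2 x - c) = 2 * A2 x"
    by (simp_all add: algebra_simps)
  have double: "norm (2 * v) = 2 * norm v" for v :: complex
    by (simp add: norm_mult)
  show "norm (A1 x - c) \<le> 2 * B"
    using norm_triangle_ineq[of "A1 x - A2 x - c" "A1 x + A2 x - c"] minus plus
    unfolding sum double by linarith
  show "norm (A2 x) \<le> 2 * B"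
    using norm_triangle_ineq4[of "A1 x + A2 x - c" "A1 x - A2 x - c"] minus plus
    unfolding diff double by linarith
qed

lemma exp_wronskian_asymptotics:
  fixes k :: real
  assumes lim: "((\<lambda>y. f y - exp (\<i> * of_real (k * y)) * \<delta>) \<longlongrightarrow> 0) at_top"
  shows "((\<lambda>y. exp_wronskian (- \<i> * of_real k) f f' y
            - exp (\<i> * of_real (- 2 * k * y)) * exp_wronskian (\<i> * of_real k) f f' y)
          \<longlongrightarrow> 2 * \<i> * of_real k * \<delta>) at_top"
proof -
  define e where "e y = exp (\<i> * of_real (k * y))" for y
  have e: "e y \<noteq> 0" "norm (e y) = 1" for y
    unfolding e_def by simp_all
  have asym: "exp_wronskian (- \<i> * of_real k) f f' y
      - exp (\<i> * of_real (- 2 * k * y)) * exp_wronskian (\<i> * of_real k) f f' y - 2 * \<i> * of_real k * \<delta>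
      = 2 * \<i> * of_real k * (inverse (e y) * (f y - e y * \<delta>))" for y
  proof -
    have e2: "exp (\<i> * of_real (- 2 * k * y)) = inverse (e y) * inverse (e y)"
      unfolding e_def by (simp only: exp_add[symmetric] exp_minus[symmetric]) (simp add: algebra_simps)
    have e_minus: "exp (of_real y * (- \<i> * of_real k)) = inverse (e y)"
      unfolding e_def by (simp add: exp_minus[symmetric] algebra_simps)
    have e_plus: "exp (of_real y * (\<i> * of_real k)) = e y"
      unfolding e_def by (simp add: algebra_simps)
    show ?thesis
      unfolding exp_wronskian_def e2 e_minus e_plus using e(1)[of y] by (simp add: field_simps)
  qed
  have "((\<lambda>y. inverse (e y) * (f y - e y * \<delta>)) \<longlongrightarrow> 0) at_top"
  proof (rule tendsto_norm_zero_cancel)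
    have "norm (inverse (e y) * (f y - e y * \<delta>)) = norm (f y - e y * \<delta>)" for y
      using e(2) by (simp add: norm_mult norm_inverse)
    with tendsto_norm_zero[OF lim]
    show "((\<lambda>y. norm (inverse (e y) * (f y - e y * \<delta>))) \<longlongrightarrow> 0) at_top"
      unfolding e_def by simp
  qed
  from tendsto_mult_right_zero[OF this, of "2 * \<i> * of_real k"]
  show ?thesis
    unfolding asym[symmetric] by (rule LIM_zero_cancel)
qed

lemma jost_scalar_bound:
  fixes w :: "real \<Rightarrow> real" and k :: real
  assumes k: "k \<noteq> 0" and sol: "helmholtz_solution k g f f'"
    and w: "\<And>t. t \<ge> 0 \<Longrightarrow> norm (g t) \<le> w t" "w integrable_on {0..}"
    and lim: "((\<lambda>y. f y - exp (\<i> * of_real (k * y)) * \<delta>) \<longlongrightarrow> 0) at_top"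
  shows "\<And>x. x \<ge> 0 \<Longrightarrow> norm (f x - exp (\<i> * of_real (k * x)) * \<delta>) \<le> 2 * integral {0..} w / \<bar>k\<bar>"
    and "norm (f' 0 - \<i> * of_real k * \<delta>) \<le> 2 * integral {0..} w"
proof -
  define B where "B = integral {0..} w"
  define e where "e y = exp (\<i> * of_real (k * y))" for y
  define W1 where "W1 = exp_wronskian (- \<i> * of_real k) f f'"
  define W2 where "W2 = exp_wronskian (\<i> * of_real k) f f'"
  have e: "e y \<noteq> 0" "norm (e y) = 1" for y
    unfolding e_def by simp_all
  have W1: "W1 y = inverse (e y) * (f' y + \<i> * of_real k * f y)" for y
    unfolding W1_def exp_wronskian_def e_def by (simp add: exp_minus[symmetric] algebra_simps)
  have W2: "W2 y = e y * (f' y - \<i> * of_real k * f y)" for y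
    unfolding W2_def exp_wronskian_def e_def by (simp add: algebra_simps)
  have osc1: "norm (W1 b - W1 a) \<le> B" and osc2: "norm (W2 b - W2 a) \<le> B"
    if "0 \<le> a" "a \<le> b" for a b
    unfolding W1_def W2_def B_def
    by (rule exp_wronskian_oscillation[OF _ _ sol w that]; simp add: power_mult_distrib)+
  have W1_bound: "norm (W1 x - 2 * \<i> * of_real k * \<delta>) \<le> 2 * B"
    and W2_bound: "norm (W2 x) \<le> 2 * B" if "0 \<le> x" for x
    using bounded_oscillation_limit_bound[OF _ osc1 osc2
        exp_wronskian_asymptotics[OF lim, where f'=f', folded W1_def W2_def] that] k
    by auto
  show "norm (f x - exp (\<i> * of_real (k * x)) * \<delta>) \<le> 2 * integral {0..} w / \<bar>k\<bar>" if x: "x \<ge> 0" for x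
  proof -
    have "f x - e x * \<delta> =
        (e x * (W1 x - 2 * \<i> * of_real k * \<delta>) - inverse (e x) * W2 x) / (2 * \<i> * of_real k)"
      unfolding W1 W2 using e(1)[of x] k by (simp add: field_simps)
    also have "norm \<dots> \<le> (norm (W1 x - 2 * \<i> * of_real k * \<delta>) + norm (W2 x)) / (2 * \<bar>k\<bar>)"
      using norm_triangle_ineq4[of "e x * (W1 x - 2 * \<i> * of_real k * \<delta>)" "inverse (e x) * W2 x"] e k
      by (simp add: norm_divide norm_mult norm_inverse divide_right_mono)
    also have "\<dots> \<le> 4 * B / (2 * \<bar>k\<bar>)"
      using W1_bound[OF x] W2_bound[OF x] by (intro divide_right_mono) auto
    finally show ?thesis unfolding e_def B_def by simp
  qed
  have "e 0 = 1" unfolding e_def by simp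
  then have "f' 0 - \<i> * of_real k * \<delta> = ((W1 0 - 2 * \<i> * of_real k * \<delta>) + W2 0) / 2"
    unfolding W1 W2 by (simp add: field_simps)
  also have "norm \<dots> \<le> (norm (W1 0 - 2 * \<i> * of_real k * \<delta>) + norm (W2 0)) / 2"
    by (simp add: norm_divide divide_right_mono norm_triangle_ineq)
  finally show "norm (f' 0 - \<i> * of_real k * \<delta>) \<le> 2 * integral {0..} w"
    using W1_bound[of 0] W2_bound[of 0] unfolding B_def by simp
qed

lemma mat_solution_entry:
  fixes Q :: "real \<Rightarrow> complex^'n::finite^'n"
  assumes sol: "mat_solution Q k F F'" and Q: "Q absolutely_integrable_on {0..}"
  shows "helmholtz_solution k (\<lambda>t. (Q t ** F t) $ i $ j) (\<lambda>x. F x $ i $ j) (\<lambda>x. F' x $ i $ j)"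
  unfolding helmholtz_solution_def
proof (intro conjI allI impI)
  fix x :: real assume x: "0 \<le> x"
  have "(F has_vector_derivative F' x) (at x within {0..})"
    using sol x unfolding mat_solution_def by blast
  from bounded_linear.has_vector_derivative[OF bounded_linear_matrix_entry this]
  show "((\<lambda>x. F x $ i $ j) has_vector_derivative F' x $ i $ j) (at x within {0..})" .
  have "((\<lambda>t. (Q t - mat (complex_of_real (k^2))) ** F t) has_integral (F' x - F' 0)) {0..x}"
    using sol x unfolding mat_solution_def by blast
  from has_integral_linear[OF this bounded_linear_matrix_entry[of i j]]
  show "((\<lambda>t. (Q t ** F t) $ i $ j - of_real (k^2) * F t $ i $ j) has_integral
      (F' x $ i $ j - F' 0 $ i $ j)) {0..x}"
    by (simp add: o_def matrix_mult_diff_mat_entry)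
  have "(\<lambda>t. F t $ l $ j * Q t $ i $ l) absolutely_integrable_on {0..x}" for l
  proof (rule absolutely_integrable_bounded_measurable_product[OF bilinear_times])
    have "continuous_on {0..} F"
      using sol unfolding mat_solution_def by (intro continuous_on_vector_derivative) auto
    then have c: "continuous_on {0..x} (\<lambda>t. F t $ l $ j)"
      by (intro continuous_intros) (auto intro: continuous_on_subset)
    show "(\<lambda>t. F t $ l $ j) \<in> borel_measurable (lebesgue_on {0..x})"
      by (rule continuous_imp_measurable_on_sets_lebesgue[OF c]) simp
    show "bounded ((\<lambda>t. F t $ l $ j) ` {0..x})"
      by (rule compact_imp_bounded[OF compact_continuous_image[OF c]]) simp
    show "(\<lambda>t. Q t $ i $ l) absolutely_integrable_on {0..x}"
      using absolutely_integrable_linear[OF absolutely_integrable_on_subinterval[OF Q, of 0 x]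
          bounded_linear_matrix_entry[of i l]]
      by (simp add: o_def)
  qed simp
  then have "(\<lambda>t. \<Sum>l\<in>UNIV. F t $ l $ j * Q t $ i $ l) absolutely_integrable_on {0..x}"
    by (intro absolutely_integrable_sum) simp
  then show "(\<lambda>t. (Q t ** F t) $ i $ j) absolutely_integrable_on {0..x}"
    by (simp add: matrix_matrix_mult_def mult.commute)
qed

lemma jost_bounded:
  assumes "is_jost Q k F F'"
  obtains M where "\<And>x i j. x \<ge> 0 \<Longrightarrow> norm (F x $ i $ j) \<le> M"
proof -
  have "continuous_on {0..} F"
    using assms unfolding is_jost_def mat_solution_def by (intro continuous_on_vector_derivative) auto
  obtain X where X: "\<And>x. x \<ge> X \<Longrightarrow> norm (F x - mat (exp (\<i> * complex_of_real (k * x)))) < 1"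
    using assms unfolding is_jost_def tendsto_iff eventually_at_top_linorder
    by (metis dist_0_norm dist_commute zero_less_one)
  have "compact (F ` {0..max X 0})"
    by (rule compact_continuous_image[OF continuous_on_subset[OF \<open>continuous_on {0..} F\<close>]]) auto
  then obtain M0 where M0: "\<And>x. x \<in> {0..max X 0} \<Longrightarrow> norm (F x) \<le> M0"
    using compact_imp_bounded bounded_iff by (metis image_eqI)
  have "norm (F x $ i $ j) \<le> max M0 2" if x: "x \<ge> 0" for x i j
  proof (cases "x \<le> max X 0")
    case True
    then show ?thesis using M0[of x] x norm_matrix_entry_le[of "F x" i j] by auto
  next
    case False
    let ?E = "mat (exp (\<i> * complex_of_real (k * x))) :: complex^_^_"
    have "X \<le> x" using False by simp
    from le_less_trans[OF norm_matrix_entry_le X[OF this]] have "norm ((F x - ?E) $ i $ j) < 1" .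
    moreover have "norm (?E $ i $ j) \<le> 1"
      by (simp add: mat_def)
    moreover have "norm (F x $ i $ j) \<le> norm ((F x - ?E) $ i $ j) + norm (?E $ i $ j)"
      using norm_triangle_ineq[of "(F x - ?E) $ i $ j" "?E $ i $ j"] by simp
    ultimately show ?thesis by linarith
  qed
  then show ?thesis by (rule that)
qed

lemma jost_entry_bound:
  fixes Q :: "real \<Rightarrow> complex^'n::finite^'n" and F F' :: "real \<Rightarrow> complex^'n^'n"
  assumes k: "k \<noteq> 0" and jost: "is_jost Q k F F'"
    and Q: "Q absolutely_integrable_on {0..}"
    and m: "\<And>x i j. x \<ge> 0 \<Longrightarrow> norm (F x $ i $ j) \<le> m"
  shows "\<And>x. x \<ge> 0 \<Longrightarrow> norm (F x $ i $ j - exp (\<i> * of_real (k * x)) * mat 1 $ i $ j)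
          \<le> 2 * (real CARD('n) * m * integral {0..} (\<lambda>t. norm (Q t))) / \<bar>k\<bar>"
    and "norm (F' 0 $ i $ j - \<i> * of_real k * mat 1 $ i $ j)
          \<le> 2 * (real CARD('n) * m * integral {0..} (\<lambda>t. norm (Q t)))"
proof -
  define w where "w t = real CARD('n) * m * norm (Q t)" for t
  have "(\<lambda>t. norm (Q t)) integrable_on {0..}"
    using Q absolutely_integrable_on_def by blast
  then have w: "w integrable_on {0..}"
    and w_int: "integral {0..} w = real CARD('n) * m * integral {0..} (\<lambda>t. norm (Q t))"
    unfolding w_def by (simp_all add: integrable_on_mult_right)
  have g: "norm ((Q t ** F t) $ i $ j) \<le> w t" if "t \<ge> 0" for t
    using norm_matrix_mult_entry_le[of "F t" j m "Q t" i] m[OF that] unfolding w_def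
    by (simp add: mult_ac)
  have "((\<lambda>y. (F y - mat (exp (\<i> * complex_of_real (k * y)))) $ i $ j)
      \<longlongrightarrow> (0::complex^'n^'n) $ i $ j) at_top"
    using jost unfolding is_jost_def by (intro tendsto_vec_nth) blast
  then have lim: "((\<lambda>y. F y $ i $ j - exp (\<i> * of_real (k * y)) * mat 1 $ i $ j) \<longlongrightarrow> 0) at_top"
    by (cases "i = j") (simp_all add: mat_def)
  have sol: "helmholtz_solution k (\<lambda>t. (Q t ** F t) $ i $ j) (\<lambda>x. F x $ i $ j) (\<lambda>x. F' x $ i $ j)"
    using jost Q unfolding is_jost_def by (blast intro: mat_solution_entry)
  show "norm (F x $ i $ j - exp (\<i> * of_real (k * x)) * mat 1 $ i $ j)
      \<le> 2 * (real CARD('n) * m * integral {0..} (\<lambda>t. norm (Q t))) / \<bar>k\<bar>" if "x \<ge> 0" for x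
    using jost_scalar_bound(1)[OF k sol g w lim that] unfolding w_int .
  show "norm (F' 0 $ i $ j - \<i> * of_real k * mat 1 $ i $ j)
      \<le> 2 * (real CARD('n) * m * integral {0..} (\<lambda>t. norm (Q t)))"
    using jost_scalar_bound(2)[OF k sol g w lim] unfolding w_int .
qed

(* Bootstrap: with m the supremum of the entries of F, the previous bound gives m \<le> 1 + m / 2
   once \<bar>k\<bar> is large, hence m \<le> 2. *)
lemma jost_entries_le_2:
  fixes Q :: "real \<Rightarrow> complex^'n::finite^'n" and F F' :: "real \<Rightarrow> complex^'n^'n"
  assumes k: "k \<noteq> 0" and jost: "is_jost Q k F F'"
    and Q: "Q absolutely_integrable_on {0..}"
    and large: "4 * real CARD('n) * integral {0..} (\<lambda>t. norm (Q t)) \<le> \<bar>k\<bar>"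
    and x: "0 \<le> x"
  shows "norm (F x $ i $ j) \<le> 2"
proof -
  define C where "C = 2 * real CARD('n) * integral {0..} (\<lambda>t. norm (Q t)) / \<bar>k\<bar>"
  define S where "S = {norm (F x $ i $ j) | x i j. 0 \<le> x}"
  obtain M where "\<And>x i j. x \<ge> 0 \<Longrightarrow> norm (F x $ i $ j) \<le> M"
    using jost_bounded[OF jost] by blast
  then have bdd: "bdd_above S"
    unfolding S_def bdd_above_def by blast
  have F_le_Sup: "norm (F x $ i $ j) \<le> Sup S" if "x \<ge> 0" for x i j
    by (rule cSup_upper[OF _ bdd]) (use that in \<open>auto simp: S_def\<close>)
  have "0 \<le> Sup S" using F_le_Sup[of 0] norm_ge_zero order_trans by blast
  have "Sup S \<le> 1 + C * Sup S"
  proof (rule cSup_least)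
    show "S \<noteq> {}" unfolding S_def by blast
    fix s assume "s \<in> S"
    then obtain x i j where s: "s = norm (F x $ i $ j)" "0 \<le> x" unfolding S_def by blast
    define E where "E = exp (\<i> * of_real (k * x)) * mat 1 $ i $ j"
    have "norm E \<le> 1"
      by (simp add: E_def norm_mult mat_def)
    moreover have "norm (F x $ i $ j) \<le> norm (F x $ i $ j - E) + norm E"
      using norm_triangle_ineq[of "F x $ i $ j - E" E] by simp
    moreover have "norm (F x $ i $ j - E) \<le> C * Sup S"
      using jost_entry_bound(1)[OF k jost Q F_le_Sup s(2)] unfolding E_def C_def by (simp add: field_simps)
    ultimately show "s \<le> 1 + C * Sup S"
      unfolding s by linarith
  qed
  moreover have "C * Sup S \<le> Sup S / 2"
    using mult_right_mono[OF large \<open>0 \<le> Sup S\<close>] k by (simp add: C_def field_simps)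
  ultimately show ?thesis
    using F_le_Sup[OF x, of i j] by linarith
qed

lemma jost_bounds:
  fixes Q :: "real \<Rightarrow> complex^'n::finite^'n" and F F' :: "real \<Rightarrow> complex^'n^'n"
  defines "q \<equiv> integral {0..} (\<lambda>t. norm (Q t))"
  assumes k: "k \<noteq> 0" and jost: "is_jost Q k F F'"
    and Q: "Q absolutely_integrable_on {0..}"
    and large: "4 * real CARD('n) * q \<le> \<bar>k\<bar>"
  shows "norm (F 0 $ i $ j - mat 1 $ i $ j) \<le> 4 * real CARD('n) * q / \<bar>k\<bar>"
    and "norm (F' 0 $ i $ j - mat (\<i> * of_real k) $ i $ j) \<le> 4 * real CARD('n) * q"
proof -
  note entries = jost_entries_le_2[OF k jost Q large[unfolded q_def]]
  show "norm (F 0 $ i $ j - mat 1 $ i $ j) \<le> 4 * real CARD('n) * q / \<bar>k\<bar>"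
    using jost_entry_bound(1)[OF k jost Q entries order_refl, of i j] unfolding q_def by simp
  have "mat (\<i> * of_real k) $ i $ j = \<i> * of_real k * mat 1 $ i $ j"
    by (simp add: mat_def)
  then show "norm (F' 0 $ i $ j - mat (\<i> * of_real k) $ i $ j) \<le> 4 * real CARD('n) * q"
    using jost_entry_bound(2)[OF k jost Q entries, of i j] unfolding q_def by simp
qed

lemma tendsto_at_infinity_of_inverse_bound:
  fixes f :: "real \<Rightarrow> 'a::real_normed_vector"
  assumes "eventually (\<lambda>k. norm (f k - l) \<le> C / \<bar>k\<bar>) at_infinity"
  shows "(f \<longlongrightarrow> l) at_infinity"
proof -
  have "((\<lambda>k::real. C / norm k) \<longlongrightarrow> 0) at_infinity"
    by (intro tendsto_divide_0[OF tendsto_const] filterlim_at_top_imp_at_infinity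
        filterlim_at_infinity_imp_norm_at_top filterlim_ident)
  then have "((\<lambda>k. C / \<bar>k\<bar>) \<longlongrightarrow> 0) at_infinity"
    by simp
  with assms have "((\<lambda>k. f k - l) \<longlongrightarrow> 0) at_infinity"
    by (rule Lim_null_comparison)
  then show ?thesis by (rule LIM_zero_cancel)
qed

lemma jost_high_energy_limits:
  fixes Q :: "real \<Rightarrow> complex^'n::finite^'n" and F Fx :: "real \<Rightarrow> real \<Rightarrow> complex^'n^'n"
  assumes jost: "\<And>k. k \<noteq> 0 \<Longrightarrow> is_jost Q k (\<lambda>x. F x k) (\<lambda>x. Fx x k)"
    and Q: "Q absolutely_integrable_on {0..}"
  shows "((\<lambda>k. F 0 k) \<longlongrightarrow> mat 1) at_infinity"
    and "((\<lambda>k. (1 / k) *\<^sub>R Fx 0 k) \<longlongrightarrow> mat \<i>) at_infinity"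
proof -
  define C where "C = 4 * real CARD('n) * integral {0..} (\<lambda>t. norm (Q t))"
  have large: "eventually (\<lambda>k::real. k \<noteq> 0 \<and> C \<le> \<bar>k\<bar>) at_infinity"
    unfolding eventually_at_infinity by (intro exI[of _ "max 1 C"]) auto
  show "((\<lambda>k. F 0 k) \<longlongrightarrow> mat 1) at_infinity"
  proof (intro tendsto_matrixI tendsto_at_infinity_of_inverse_bound)
    fix i j
    show "eventually (\<lambda>k. norm (F 0 k $ i $ j - mat 1 $ i $ j) \<le> C / \<bar>k\<bar>) at_infinity"
      using large by eventually_elim (use jost_bounds(1)[OF _ jost Q] in \<open>auto simp: C_def\<close>)
  qed
  show "((\<lambda>k. (1 / k) *\<^sub>R Fx 0 k) \<longlongrightarrow> mat \<i>) at_infinity"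
  proof (intro tendsto_matrixI tendsto_at_infinity_of_inverse_bound)
    fix i j
    show "eventually (\<lambda>k. norm (((1 / k) *\<^sub>R Fx 0 k) $ i $ j - mat \<i> $ i $ j) \<le> C / \<bar>k\<bar>) at_infinity"
      using large
    proof eventually_elim
      case (elim k)
      have "((1 / k) *\<^sub>R Fx 0 k) $ i $ j - mat \<i> $ i $ j =
          (Fx 0 k $ i $ j - mat (\<i> * of_real k) $ i $ j) / of_real k"
        unfolding vector_scaleR_component using elim by (simp add: scaleR_conv_of_real mat_def field_simps)
      then show ?case
        using jost_bounds(2)[OF _ jost Q, of k i j] elim
        by (simp add: C_def norm_divide divide_right_mono)
    qed
  qed
qed

section \<open>The orthogonal projection onto ker(U + I)\<close>

lemma cinner_diff_left: "cinner (x - y) w = cinner x w - cinner y w"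
  by (simp add: cinner_def sum_subtractf left_diff_distrib)

lemma cinner_scale_left: "cinner (c *s x) w = c * cinner x w"
  by (simp add: cinner_def sum_distrib_left mult.assoc)

lemma cinner_scale_right: "cinner x (c *s w) = cnj c * cinner x w"
  by (simp add: cinner_def sum_distrib_left algebra_simps)

lemma cinner_sum_left: "finite S \<Longrightarrow> cinner (\<Sum>j\<in>S. f j) w = (\<Sum>j\<in>S. cinner (f j) w)"
  by (induction S rule: finite_induct) (simp_all add: cinner_def sum.distrib distrib_right)

lemma Re_cinner: "Re (cinner x y) = inner x y"
  by (simp add: cinner_def inner_vec_def inner_complex_def Re_sum)

lemma cinner_self_eq_0: "cinner x x = 0 \<longleftrightarrow> x = 0"
proof
  assume "cinner x x = 0"
  then have "inner x x = 0" using Re_cinner[of x x] by simp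
  then show "x = 0" by simp
qed (simp add: cinner_def)

lemma cinner_matrix_vector: "cinner (M *v v) w = cinner v (cadj M *v w)"
proof -
  have "cinner (M *v v) w = (\<Sum>i\<in>UNIV. \<Sum>j\<in>UNIV. M $ i $ j * v $ j * cnj (w $ i))"
    by (simp add: cinner_def matrix_vector_mult_def sum_distrib_right)
  also have "\<dots> = (\<Sum>j\<in>UNIV. \<Sum>i\<in>UNIV. M $ i $ j * v $ j * cnj (w $ i))"
    by (rule sum.swap)
  also have "\<dots> = cinner v (cadj M *v w)"
    by (simp add: cinner_def matrix_vector_mult_def cadj_def sum_distrib_left mult_ac)
  finally show ?thesis .
qed

lemma cinner_eq_0_if_orthogonal:
  assumes "orthogonal z w" "orthogonal z (\<i> *s w)"
  shows "cinner z w = 0"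
  using assms Re_cinner[of z w] Re_cinner[of z "\<i> *s w"]
  by (simp add: orthogonal_def cinner_scale_right complex_eq_iff)

definition orth_proj_on :: "(complex^'n::finite) set \<Rightarrow> 'n cmat \<Rightarrow> bool" where
  "orth_proj_on K P \<longleftrightarrow> (\<forall>v. P *v v \<in> K \<and> (\<forall>w\<in>K. cinner (v - P *v v) w = 0))"

lemma orth_proj_kerUI_eq: "orth_proj_kerUI U = (THE P. orth_proj_on (kerUI U) P)"
  by (simp add: orth_proj_kerUI_def orth_proj_on_def)

lemma orth_decomp_unique:
  assumes K: "subspace K" and u: "u1 \<in> K" "u2 \<in> K"
    and orth: "\<forall>w\<in>K. cinner (v - u1) w = 0" "\<forall>w\<in>K. cinner (v - u2) w = 0"
  shows "u1 = u2"
proof -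
  have "u1 - u2 \<in> K" using K u by (simp add: subspace_diff)
  then have "cinner (u1 - u2) (u1 - u2) = cinner (v - u2) (u1 - u2) - cinner (v - u1) (u1 - u2)"
    by (simp add: cinner_diff_left)
  also have "\<dots> = 0" using orth \<open>u1 - u2 \<in> K\<close> by simp
  finally show ?thesis by (simp add: cinner_self_eq_0)
qed

lemma orth_proj_on_apply:
  assumes "orth_proj_on K P" "subspace K" "u \<in> K" "\<forall>w\<in>K. cinner (v - u) w = 0"
  shows "P *v v = u"
  using assms orth_decomp_unique[OF assms(2), of "P *v v" u v] unfolding orth_proj_on_def by blast

lemma orth_proj_on_unique:
  assumes K: "subspace K" and P1: "orth_proj_on K P1" and P2: "orth_proj_on K P2"
  shows "P1 = P2"
  unfolding matrix_eq
proof
  fix v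
  have "P2 *v v \<in> K" "\<forall>w\<in>K. cinner (v - P2 *v v) w = 0"
    using P2 unfolding orth_proj_on_def by blast+
  then show "P1 *v v = P2 *v v" by (rule orth_proj_on_apply[OF P1 K])
qed

lemma subspace_matrix_kernel: "subspace {v. M *v v = 0}"
  for M :: "complex^'n::finite^'m::finite"
  using matrix_vector_mul_linear[of M] unfolding subspace_def by (simp add: linear_add linear_scale)

lemma orth_proj_on_kernel_exists: "\<exists>P. orth_proj_on {v. M *v v = 0} P"
  for M :: "complex^'n::finite^'m::finite"
proof -
  define K where "K = {v. M *v v = 0}"
  have K: "subspace K" unfolding K_def by (rule subspace_matrix_kernel)
  have scale: "c *s v \<in> K" if "v \<in> K" for c v
  proof -
    have "M *v (c *s v) = c *s (M *v v)"
      by (simp add: vec_eq_iff matrix_vector_mult_def sum_distrib_left mult_ac)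
    then show ?thesis using that by (simp add: K_def)
  qed
  have "\<exists>p. p \<in> K \<and> (\<forall>w\<in>K. cinner (axis j 1 - p) w = 0)" for j :: 'n
  proof -
    have span: "span K = K" using K by (simp add: span_eq_iff)
    obtain y z where y: "y \<in> K" and z: "\<And>w. w \<in> K \<Longrightarrow> orthogonal z w" and "axis j 1 = y + z"
      using orthogonal_subspace_decomp_exists[of K "axis j 1"] unfolding span by metis
    then have "cinner (axis j 1 - y) w = 0" if "w \<in> K" for w
      using cinner_eq_0_if_orthogonal[OF z z] scale that by simp
    with y show ?thesis by blast
  qed
  then obtain p where p: "\<And>j. p j \<in> K" "\<And>j w. w \<in> K \<Longrightarrow> cinner (axis j 1 - p j) w = 0"
    by metis
  define P where "P = (\<chi> i j. p j $ i)"
  have Pv: "P *v v = (\<Sum>j\<in>UNIV. v $ j *s p j)" for v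
    by (simp add: vec_eq_iff P_def matrix_vector_mult_def mult.commute)
  have "orth_proj_on K P"
    unfolding orth_proj_on_def
  proof (intro allI conjI ballI)
    fix v :: "complex^'n"
    show "P *v v \<in> K"
      unfolding Pv using p(1) by (intro subspace_sum[OF K]) (simp add: scale)
    fix w assume w: "w \<in> K"
    have "v - P *v v = (\<Sum>j\<in>UNIV. v $ j *s (axis j 1 - p j))"
      unfolding Pv
      by (subst (1) basis_expansion[symmetric, of v]) (simp add: sum_subtractf vector_ssub_ldistrib)
    then have "cinner (v - P *v v) w = (\<Sum>j\<in>UNIV. v $ j * cinner (axis j 1 - p j) w)"
      by (simp only: cinner_sum_left[OF finite] cinner_scale_left)
    then show "cinner (v - P *v v) w = 0"
      using p(2)[OF w] by simp
  qed
  then show ?thesis unfolding K_def by blast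
qed

lemma orth_proj_kerUI: "orth_proj_on (kerUI U) (orth_proj_kerUI U)"
proof -
  have K: "subspace (kerUI U)"
    unfolding kerUI_def by (rule subspace_matrix_kernel)
  obtain P where P: "orth_proj_on (kerUI U) P"
    using orth_proj_on_kernel_exists[of "U + mat 1"] unfolding kerUI_def by blast
  have "orth_proj_kerUI U = P"
    unfolding orth_proj_kerUI_eq
  proof (rule the_equality)
    show "orth_proj_on (kerUI U) P" by (rule P)
    show "P' = P" if "orth_proj_on (kerUI U) P'" for P'
      by (rule orth_proj_on_unique[OF K that P])
  qed
  with P show ?thesis by simp
qed

lemma unitary_kerUI_orthogonal_range:
  assumes U: "unitary U" and w: "w \<in> kerUI U"
  shows "cinner ((U + mat 1) *v v) w = 0"
proof -
  have Uw: "U *v w = - w"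
    using w by (simp add: kerUI_def matrix_vector_mult_add_rdistrib eq_neg_iff_add_eq_0)
  have "cadj U *v w = cadj U *v (- (U *v w))" by (simp add: Uw)
  also have "\<dots> = - w"
    using U by (simp add: unitary_def matrix_vector_mul_assoc vec.neg)
  moreover have "cadj (U + mat 1) = cadj U + mat 1"
    using cadj_mat[of 1] by (simp add: cadj_def vec_eq_iff)
  ultimately have "cadj (U + mat 1) *v w = 0"
    by (simp add: matrix_vector_mult_add_rdistrib)
  then show ?thesis unfolding cinner_matrix_vector by (simp add: cinner_def)
qed

lemma unitary_orth_proj_kerUI:
  fixes U :: "'n::finite cmat"
  assumes U: "unitary U"
  defines "P \<equiv> orth_proj_kerUI U"
  shows "P ** P = P" "bcA U ** P = 0" "P ** bcA U = 0" "bcB U ** P = mat (- \<i>) ** P"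
proof -
  have K: "subspace (kerUI U)"
    unfolding kerUI_def by (rule subspace_matrix_kernel)
  have P: "orth_proj_on (kerUI U) P"
    unfolding P_def by (rule orth_proj_kerUI)
  have PK: "P *v v \<in> kerUI U" for v
    using P unfolding orth_proj_on_def by blast
  have UP: "(U + mat 1) ** P = 0"
    unfolding matrix_eq using PK by (simp add: kerUI_def matrix_vector_mul_assoc[symmetric])
  have PU: "P ** (U + mat 1) = 0"
    unfolding matrix_eq matrix_vector_mul_assoc[symmetric]
    using orth_proj_on_apply[OF P K subspace_0[OF K]] unitary_kerUI_orthogonal_range[OF U] by simp
  show "P ** P = P"
    unfolding matrix_eq matrix_vector_mul_assoc[symmetric]
    using orth_proj_on_apply[OF P K PK] by (simp add: cinner_def)
  show "bcA U ** P = 0"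
    unfolding bcA_def by (simp add: matrix_mul_assoc[symmetric] UP)
  show "P ** bcA U = 0"
    unfolding bcA_def
    by (simp add: matrix_mul_assoc mat_mult_comm[symmetric]) (simp add: matrix_mul_assoc[symmetric] PU)
  have U_minus: "U - mat 1 = (U + mat 1) - mat 2"
    by (simp add: vec_eq_iff mat_def)
  have "(U - mat 1) ** P = - (mat 2 ** P)"
    unfolding U_minus cmat_mult.diff_left UP by simp
  then show "bcB U ** P = mat (- \<i>) ** P"
    unfolding bcB_def matrix_mul_assoc[symmetric]
    by (simp add: cmat_mult.minus_right matrix_mul_assoc mat_mult_mat cmat_mult.minus_left[symmetric]
        mat_uminus)
qed

lemma invertible_orth_proj_kerUI_add_bcA:
  fixes U :: "'n::finite cmat"
  assumes U: "unitary U"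
  shows "invertible (orth_proj_kerUI U + bcA U)"
proof -
  define P where "P = orth_proj_kerUI U"
  have K: "subspace (kerUI U)"
    unfolding kerUI_def by (rule subspace_matrix_kernel)
  have P: "orth_proj_on (kerUI U) P"
    unfolding P_def by (rule orth_proj_kerUI)
  have PK: "P *v v \<in> kerUI U" for v
    using P unfolding orth_proj_on_def by blast
  have "v = 0" if v: "(P + bcA U) *v v = 0" for v
  proof -
    have "bcA U *v v = (1/2) *s ((U + mat 1) *v v)"
      unfolding bcA_def matrix_vector_mul_assoc[symmetric]
      by (simp add: vec_eq_iff matrix_vector_mult_def mat_def if_distrib if_distribR cong: if_cong)
    moreover have "P *v v + bcA U *v v = 0"
      using v by (simp add: matrix_vector_mult_add_rdistrib)
    ultimately have Pv: "P *v v = - ((1/2) *s ((U + mat 1) *v v))"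
      by (metis eq_neg_iff_add_eq_0)
    \<comment> \<open>\<open>P v\<close> lies in \<open>ker(U + I)\<close>, which is orthogonal to the range of \<open>U + I\<close>.\<close>
    have "cinner (P *v v) (P *v v) = - ((1/2) * cinner ((U + mat 1) *v v) (P *v v))"
      unfolding Pv by (simp add: cinner_def sum_negf sum_distrib_left mult.assoc)
    then have "P *v v = 0"
      using unitary_kerUI_orthogonal_range[OF U PK] by (simp add: cinner_self_eq_0)
    then have "v \<in> kerUI U"
      using Pv by (simp add: kerUI_def vec_eq_iff)
    then have "P *v v = v"
      by (rule orth_proj_on_apply[OF P K]) (simp add: cinner_def)
    with \<open>P *v v = 0\<close> show ?thesis by simp
  qed
  then show ?thesis
    unfolding P_def[symmetric] invertible_left_inverse matrix_left_invertible_ker by blast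
qed

lemma diff_mult_matrix_inv_add_idempotent:
  fixes P A :: "'n::finite cmat"
  assumes PP: "P ** P = P" and PA: "P ** A = 0" and inv: "invertible (P + A)"
  shows "(P - A) ** matrix_inv (P + A) = mat 2 ** P - mat 1"
proof -
  define Mi where "Mi = matrix_inv (P + A)"
  have Mi: "(P + A) ** Mi = mat 1"
    unfolding Mi_def by (rule matrix_inv_mult(1)[OF inv])
  have PMi: "P ** Mi = P"
    using arg_cong[OF Mi, of "\<lambda>X. P ** X"] by (simp add: matrix_mul_assoc matrix_add_ldistrib PP PA)
  have "P - A = mat 2 ** P - (P + A)"
    by (simp add: mat_mult_left vec_eq_iff)
  then show ?thesis
    unfolding Mi_def[symmetric] by (simp only: cmat_mult.diff_left matrix_mul_assoc[symmetric] PMi Mi)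
qed

section \<open>The high-energy limit of the scattering matrix\<close>

lemma bc_rescaled_tendsto:
  fixes X Y :: "real \<Rightarrow> 'n::finite cmat" and A B P :: "'n cmat"
  assumes AP: "A ** P = 0"
    and X: "(X \<longlongrightarrow> mat 1) at_top" and Y: "((\<lambda>k. (1 / k) *\<^sub>R Y k) \<longlongrightarrow> mat c) at_top"
  shows "((\<lambda>k. (cadj (X k) ** B - cadj (Y k) ** A) ** (P + (1 / k) *\<^sub>R (mat 1 - P)))
          \<longlongrightarrow> B ** P - mat (cnj c) ** A) at_top"
proof -
  define J where "J k = P + (1 / k) *\<^sub>R (mat 1 - P)" for k :: real
  have "A ** J k = (1 / k) *\<^sub>R A" for k
    unfolding J_def by (simp add: matrix_add_ldistrib cmat_mult.scaleR_right cmat_mult.diff_right AP)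
  then have eq: "(cadj (X k) ** B - cadj (Y k) ** A) ** J k =
      cadj (X k) ** (B ** J k) - cadj ((1 / k) *\<^sub>R Y k) ** A" for k
    by (simp add: cmat_mult.diff_left matrix_mul_assoc[symmetric] cmat_mult.scaleR_right
        cmat_mult.scaleR_left cadj_scaleR)
  have "((\<lambda>k::real. 1 / k) \<longlongrightarrow> 0) at_top"
    by (rule tendsto_divide_0[OF tendsto_const filterlim_at_top_imp_at_infinity[OF filterlim_ident]])
  then have "(J \<longlongrightarrow> P + 0 *\<^sub>R (mat 1 - P)) at_top"
    unfolding J_def by (intro tendsto_intros)
  then have "((\<lambda>k. cadj (X k) ** (B ** J k) - cadj ((1 / k) *\<^sub>R Y k) ** A) \<longlongrightarrow>
      cadj (mat 1) ** (B ** P) - cadj (mat c) ** A) at_top"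
    by (intro tendsto_intros cmat_mult.tendsto tendsto_cadj X Y) simp_all
  then show ?thesis
    unfolding J_def[symmetric] eq by (simp add: cadj_mat)
qed

lemma scattering_tendsto_Uhat:
  fixes U :: "'n::finite cmat" and F Fx :: "real \<Rightarrow> real \<Rightarrow> 'n cmat"
  assumes U: "unitary U"
    and F0: "((\<lambda>k. F 0 k) \<longlongrightarrow> mat 1) at_top" "((\<lambda>k. F 0 (- k)) \<longlongrightarrow> mat 1) at_top"
    and Fx0: "((\<lambda>k. (1 / k) *\<^sub>R Fx 0 k) \<longlongrightarrow> mat \<i>) at_top"
      "((\<lambda>k. (1 / k) *\<^sub>R Fx 0 (- k)) \<longlongrightarrow> mat (- \<i>)) at_top"
  shows "(scattering U F Fx \<longlongrightarrow> Uhat U) at_top"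
proof -
  define P where "P = orth_proj_kerUI U"
  define A where "A = bcA U"
  define B where "B = bcB U"
  define J where "J k = P + (1 / k) *\<^sub>R (mat 1 - P)" for k :: real
  define N where "N k = cadj (F 0 k) ** B - cadj (Fx 0 k) ** A" for k
  define D where "D k = cadj (F 0 (- k)) ** B - cadj (Fx 0 (- k)) ** A" for k
  note PA = unitary_orth_proj_kerUI[OF U, folded P_def A_def B_def]
  have inv: "invertible (P + A)"
    unfolding P_def A_def by (rule invertible_orth_proj_kerUI_add_bcA[OF U])
  have "B ** P - mat (cnj \<i>) ** A = mat (- \<i>) ** (P - A)"
    by (simp add: PA(4) cmat_mult.diff_right)
  then have N_lim: "((\<lambda>k. N k ** J k) \<longlongrightarrow> mat (- \<i>) ** (P - A)) at_top"
    using bc_rescaled_tendsto[OF PA(2) F0(1) Fx0(1), of B] unfolding N_def J_def by simp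
  have "B ** P - mat (cnj (- \<i>)) ** A = mat (- \<i>) ** (P + A)"
    by (simp add: PA(4) matrix_add_ldistrib mat_uminus[symmetric] cmat_mult.minus_left)
  then have D_lim: "((\<lambda>k. D k ** J k) \<longlongrightarrow> mat (- \<i>) ** (P + A)) at_top"
    using bc_rescaled_tendsto[OF PA(2) F0(2) Fx0(2), of B] unfolding D_def J_def by simp
  have "- \<i> \<noteq> 0" by simp
  note D_inv = matrix_inv_mat_mult[OF inv this] and cancel = mat_mult_cancel[OF this]
  have "((\<lambda>k. - (N k ** J k ** matrix_inv (D k ** J k))) \<longlongrightarrow>
      - (mat (- \<i>) ** (P - A) ** matrix_inv (mat (- \<i>) ** (P + A)))) at_top"
    by (intro tendsto_minus cmat_mult.tendsto[OF N_lim] tendsto_matrix_inv(2)[OF D_lim D_inv(1)])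
  also have "- (mat (- \<i>) ** (P - A) ** matrix_inv (mat (- \<i>) ** (P + A))) = Uhat U"
    unfolding D_inv(2) cancel diff_mult_matrix_inv_add_idempotent[OF PA(1,3) inv]
    by (simp add: Uhat_def P_def)
  finally show ?thesis
  proof (rule Lim_transform_eventually)
    show "eventually (\<lambda>k. - (N k ** J k ** matrix_inv (D k ** J k)) = scattering U F Fx k) at_top"
      using tendsto_matrix_inv(1)[OF D_lim D_inv(1)]
      by eventually_elim
        (simp add: scattering_def N_def D_def A_def B_def matrix_inv_mult_right[of _ "J _"] matrix_mul_assoc)
  qed
qed

theorem lemma2:
  fixes Q :: "real \<Rightarrow> complex^'n::finite^'n"
    and U :: "complex^'n^'n"
    and F Fx :: "real \<Rightarrow> real \<Rightarrow> complex^'n^'n"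
  assumes herm: "\<And>x. x \<ge> 0 \<Longrightarrow> cadj (Q x) = Q x"
    and Qint: "(\<lambda>t. (1 + t) * norm (Q t)) integrable_on {0..}"
    and Qmeas: "Q integrable_on {0..}"
    and unit: "unitary U"
    and novl: "\<not> virtual_level_zero Q U"
    and jost: "\<And>k. k \<noteq> 0 \<Longrightarrow> is_jost Q k (\<lambda>x. F x k) (\<lambda>x. Fx x k)"
  shows "(scattering U F Fx \<longlongrightarrow> Uhat U) at_top"
proof -
  \<comment> \<open>Only the integrability of Q enters.\<close>
  have "Q absolutely_integrable_on {0..}"
    by (rule absolutely_integrable_integrable_bound[OF _ Qmeas Qint]) (simp add: mult_le_cancel_right1)
  note limits = jost_high_energy_limits[OF jost this]
  have pos: "filterlim (\<lambda>k::real. k) at_infinity at_top"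
    by (rule filterlim_at_top_imp_at_infinity[OF filterlim_ident])
  have neg: "filterlim (\<lambda>k::real. - k) at_infinity at_top"
    using filterlim_uminus_at_bot_at_top at_bot_le_at_infinity filterlim_mono by blast
  have "((\<lambda>k. - ((1 / - k) *\<^sub>R Fx 0 (- k))) \<longlongrightarrow> - mat \<i>) at_top"
    by (intro tendsto_minus filterlim_compose[OF limits(2) neg])
  then have "((\<lambda>k. (1 / k) *\<^sub>R Fx 0 (- k)) \<longlongrightarrow> mat (- \<i>)) at_top"
    by (simp add: mat_uminus)
  with filterlim_compose[OF limits(1) pos] filterlim_compose[OF limits(1) neg]
    filterlim_compose[OF limits(2) pos]
  show ?thesis
    by (intro scattering_tendsto_Uhat[OF unit]) simp_all
qed

end
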